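(* Let $V$ be a finite set and $n\ge 1$ an integer. The functions $m_G$, as $G$ ranges over all multigraphs on vertex set $V$ (self-loops allowed) with $|E(G)|\le n$, are linearly independent as functions of $(d_u)_{u\in V}\in(\mathbb{R}^n)^V$.
   Context: A multigraph $G$ on $V$ is a finite multiset $E(G)$ of edges $\{u,w\}$ with $u,w\in V$, where $u=w$ (a self-loop) is allowed. For vectors $d_u\in\mathbb{R}^n$ ($u\in V$), $m_G=\prod_{\{u,w\}\in E(G)}\langle d_u,d_w\rangle$, with multiplicity, where a self-loop at $u$ contributes the factor $\langle d_u,d_u\rangle$. *)

theory Defs
  imports "HOL-Analysis.Analysis" "HOL-Library.Multiset" "HOL-Library.Uprod"
begin

text \<open>An edge is an unordered pair (u = w allowed: a self-loop).\<close>

definition edge_factor :: "('v \<Rightarrow> real^'n) \<Rightarrow> 'v uprod \<Rightarrow> real" where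
  "edge_factor d e = (THE r. \<exists>u w. e = Upair u w \<and> r = d u \<bullet> d w)"

definition mG :: "'v uprod multiset \<Rightarrow> ('v \<Rightarrow> real^'n) \<Rightarrow> real" where
  "mG G d = (\<Prod>e\<in>#G. edge_factor d e)"

definition multigraphs_upto :: "'v set \<Rightarrow> nat \<Rightarrow> 'v uprod multiset set" where
  "multigraphs_upto V k = {G. (\<forall>e\<in>#G. set_uprod e \<subseteq> V) \<and> size G \<le> k}"

end

theory Submission
  imports Defs
begin

text \<open>Put \<open>d\<^sub>u = (x\<^bsub>u,1\<^esub>, \<dots>, x\<^bsub>u,n\<^esub>)\<close> with independent real variables \<open>x\<^bsub>u,j\<^esub>\<close>. Expanding every
  inner product coordinatewise writes \<open>m\<^sub>G\<close> as a sum, over all colourings \<open>\<sigma>\<close> of the edges of \<open>G\<close> by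
  the coordinates \<open>1..n\<close>, of the monomials \<open>\<Prod>\<^bsub>e = {u,w}\<^esub> x\<^bsub>u,\<sigma> e\<^esub> x\<^bsub>w,\<sigma> e\<^esub>\<close>. Since \<open>|E(G)| \<le> n\<close>, the edges of
  \<open>G\<close> can be coloured injectively, and then the monomial determines \<open>G\<close>: the variables of colour
  \<open>j\<close> are the two endpoints of the single edge of colour \<open>j\<close>. So in a vanishing combination
  \<open>\<Sum> c\<^sub>G m\<^sub>G\<close> the coefficient of that monomial is \<open>c\<^sub>G\<close> times the number of colourings of \<open>G\<close>
  producing it, and linear independence of monomials forces \<open>c\<^sub>G = 0\<close>.\<close>

lemma sum_eq_0_grouped_by_degree:
  fixes b :: "'a \<Rightarrow> real" and deg :: "'a \<Rightarrow> nat"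
  assumes "finite S" and "\<forall>t. (\<Sum>s\<in>S. b s * t ^ deg s) = 0"
  shows "(\<Sum>s\<in>{s\<in>S. deg s = k}. b s) = 0"
proof -
  define c where "c k = (\<Sum>s\<in>{s\<in>S. deg s = k}. b s)" for k
  define K where "K = Max (deg ` S)"
  have "(\<Sum>i\<le>K. c i * t ^ i) = 0" for t
  proof -
    have "(\<Sum>i\<le>K. c i * t ^ i) = (\<Sum>i\<in>deg ` S. c i * t ^ i)"
    proof (rule sum.mono_neutral_right)
      show "\<forall>i\<in>{..K} - deg ` S. c i * t ^ i = 0"
        by (auto simp: c_def intro!: sum.neutral)
    qed (auto simp: K_def assms(1))
    also have "\<dots> = (\<Sum>i\<in>deg ` S. \<Sum>s\<in>{s\<in>S. deg s = i}. b s * t ^ deg s)"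
      unfolding c_def sum_distrib_right by (intro sum.cong refl) auto
    also have "\<dots> = (\<Sum>s\<in>S. b s * t ^ deg s)"
      by (rule sum.image_gen[OF assms(1), symmetric])
    finally show ?thesis using assms(2) by simp
  qed
  then have "c k = 0" if "k \<le> K" using that polyfun_eq_0 by blast
  moreover have "c k = 0" if "k > K"
  proof -
    have "{s\<in>S. deg s = k} = {}" using that assms(1) Max_ge[of "deg ` S"] by (fastforce simp: K_def)
    then show ?thesis unfolding c_def by (simp only: sum.empty)
  qed
  ultimately show ?thesis unfolding c_def by (meson not_le)
qed

lemma prod_mset_fun_upd:
  "(\<Prod>i\<in>#M. (x(j := t)) i) = (\<Prod>i\<in>#{#i \<in># M. i \<noteq> j#}. x i) * t ^ count M j"
proof -
  define N where "N = {#i \<in># M. i \<noteq> j#}"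
  have M: "N + replicate_mset (count M j) j = M"
    using multiset_partition[of M "\<lambda>i. i \<noteq> j"] by (simp add: N_def filter_eq_replicate_mset)
  have "(\<Prod>i\<in>#M. (x(j := t)) i) = (\<Prod>i\<in>#N. (x(j := t)) i) * t ^ count M j"
    by (subst (1) M[symmetric]) simp
  also have "(\<Prod>i\<in>#N. (x(j := t)) i) = (\<Prod>i\<in>#N. x i)"
    by (intro arg_cong[where f = prod_mset] image_mset_cong) (auto simp: N_def)
  finally show ?thesis unfolding N_def .
qed

lemma monomials_linear_independent:
  fixes a :: "'i multiset \<Rightarrow> real"
  assumes "finite I" and "finite S" and "\<forall>M\<in>S. set_mset M \<subseteq> I"
    and "\<forall>x. (\<Sum>M\<in>S. a M * (\<Prod>i\<in>#M. x i)) = 0" and "M \<in> S"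
  shows "a M = 0"
  using assms
proof (induction I arbitrary: S a M rule: finite_induct)
  case empty
  then have "S = {{#}}" by auto
  with empty.prems(3,4) show ?case by simp
next
  case (insert j I)
  define F where "F N = {#i \<in># N. i \<noteq> j#}" for N
  define k where "k = count M j"
  define S\<^sub>k where "S\<^sub>k = {N\<in>S. count N j = k}"
  have F_split: "N = F N + replicate_mset (count N j) j" for N
    using multiset_partition[of N "\<lambda>i. i \<noteq> j"] by (simp add: F_def filter_eq_replicate_mset)
  have inj: "inj_on F S\<^sub>k"
    by (rule inj_onI) (metis (mono_tags, lifting) F_split S\<^sub>k_def mem_Collect_eq)
  txt \<open>Read as a polynomial in \<open>x\<^sub>j\<close>, the sum has vanishing coefficients; the coefficient of
    \<open>x\<^sub>j\<^sup>k\<close> is a combination of monomials in the variables \<open>I\<close> only, to which the induction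
    hypothesis applies.\<close>
  have class_vanishes: "(\<Sum>N\<in>S\<^sub>k. a N * (\<Prod>i\<in>#F N. x i)) = 0" for x
    unfolding S\<^sub>k_def
  proof (rule sum_eq_0_grouped_by_degree[OF insert.prems(1)])
    show "\<forall>t. (\<Sum>N\<in>S. a N * (\<Prod>i\<in>#F N. x i) * t ^ count N j) = 0"
    proof
      fix t
      show "(\<Sum>N\<in>S. a N * (\<Prod>i\<in>#F N. x i) * t ^ count N j) = 0"
        using spec[OF insert.prems(3), of "x(j := t)"]
        by (simp only: prod_mset_fun_upd F_def mult.assoc)
    qed
  qed
  have "a (F M + replicate_mset k j) = 0"
  proof (rule insert.IH[where S = "F ` S\<^sub>k" and a = "\<lambda>N. a (N + replicate_mset k j)"
        and M = "F M"])
    show "\<forall>x. (\<Sum>N\<in>F ` S\<^sub>k. a (N + replicate_mset k j) * (\<Prod>i\<in>#N. x i)) = 0"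
    proof
      fix x
      have "(\<Sum>N\<in>F ` S\<^sub>k. a (N + replicate_mset k j) * (\<Prod>i\<in>#N. x i))
          = (\<Sum>N\<in>S\<^sub>k. a N * (\<Prod>i\<in>#F N. x i))"
        unfolding sum.reindex[OF inj] comp_def
        by (intro sum.cong refl) (metis (mono_tags, lifting) F_split S\<^sub>k_def mem_Collect_eq)
      then show "(\<Sum>N\<in>F ` S\<^sub>k. a (N + replicate_mset k j) * (\<Prod>i\<in>#N. x i)) = 0"
        using class_vanishes by simp
    qed
  qed (use insert.prems in \<open>auto simp: S\<^sub>k_def k_def F_def\<close>)
  then show ?case using F_split[of M] by (simp add: k_def)
qed

lemma monomial_coefficients_vanish:
  fixes b :: "'q \<Rightarrow> real" and mon :: "'q \<Rightarrow> 'i multiset"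
  assumes "finite P" and "\<forall>x. (\<Sum>q\<in>P. b q * (\<Prod>i\<in>#mon q. x i)) = 0"
  shows "(\<Sum>q\<in>{q\<in>P. mon q = M}. b q) = 0"
proof (cases "M \<in> mon ` P")
  case True
  define a where "a N = (\<Sum>q\<in>{q\<in>P. mon q = N}. b q)" for N
  have "(\<Sum>N\<in>mon ` P. a N * (\<Prod>i\<in>#N. x i)) = 0" for x
  proof -
    have "(\<Sum>N\<in>mon ` P. a N * (\<Prod>i\<in>#N. x i))
        = (\<Sum>N\<in>mon ` P. \<Sum>q\<in>{q\<in>P. mon q = N}. b q * (\<Prod>i\<in>#mon q. x i))"
      unfolding a_def sum_distrib_right by (intro sum.cong refl) auto
    also have "\<dots> = (\<Sum>q\<in>P. b q * (\<Prod>i\<in>#mon q. x i))"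
      by (rule sum.image_gen[OF assms(1), symmetric])
    finally show ?thesis using assms(2) by simp
  qed
  then have "a M = 0"
    using assms(1) True
    by (intro monomials_linear_independent[of "\<Union>q\<in>P. set_mset (mon q)" "mon ` P"]) auto
  then show ?thesis by (simp add: a_def)
next
  case False
  then have "{q\<in>P. mon q = M} = {}" by auto
  then show ?thesis by (simp only: sum.empty)
qed

definition ends :: "'v uprod \<Rightarrow> 'v multiset" where
  "ends e = (THE M. \<exists>u w. e = Upair u w \<and> M = {#u, w#})"

lemma ends_Upair [simp]: "ends (Upair u w) = {#u, w#}"
  unfolding ends_def by (rule the_equality) (auto simp: add_mset_commute)

lemma size_ends [simp]: "size (ends e) = 2"
  by (cases e) simp

lemma ends_eq_iff [simp]: "ends e = ends f \<longleftrightarrow> e = f"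
  by (cases e; cases f) (auto simp: add_eq_conv_ex)

lemma edge_factor_Upair [simp]: "edge_factor d (Upair u w) = d u \<bullet> d w"
  unfolding edge_factor_def by (rule the_equality) (auto simp: inner_commute)

lemma sum_ends_determines_edges:
  assumes "finite A" and "finite B" and "card B \<le> 1"
    and "(\<Sum>l\<in>A. ends (f l)) = (\<Sum>l\<in>B. ends (g l))"
  shows "(\<Sum>l\<in>A. {#f l#}) = (\<Sum>l\<in>B. {#g l#})"
proof -
  have "size (\<Sum>l\<in>A. ends (f l)) = 2 * card A" "size (\<Sum>l\<in>B. ends (g l)) = 2 * card B"
    by simp_all
  with assms(4) have "card A = card B" by simp
  show ?thesis
  proof (cases "card B = 0")
    case True
    then show ?thesis using \<open>card A = card B\<close> assms(1,2) by simp
  next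
    case False
    then have "card A = 1" "card B = 1" using \<open>card A = card B\<close> assms(3) by simp_all
    then obtain a b where "A = {a}" "B = {b}" by (meson card_1_singletonE)
    then show ?thesis using assms(4) by simp
  qed
qed

definition colour_class :: "'n \<Rightarrow> ('v \<times> 'n) multiset \<Rightarrow> 'v multiset" where
  "colour_class j M = image_mset fst {#p \<in># M. snd p = j#}"

lemma colour_class_sum: "colour_class j (\<Sum>l\<in>A. N l) = (\<Sum>l\<in>A. colour_class j (N l))"
  using sum_comp_morphism[of "colour_class j" N A] by (simp add: colour_class_def comp_def)

lemma colour_class_pairs: "colour_class j (image_mset (\<lambda>u. (u, i)) E) = (if i = j then E else {#})"
  unfolding colour_class_def by (induction E) auto

definition coloured_monomial :: "'v uprod list \<Rightarrow> (nat \<Rightarrow> 'n) \<Rightarrow> ('v \<times> 'n) multiset" where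
  "coloured_monomial hs \<sigma> = (\<Sum>l<length hs. image_mset (\<lambda>u. (u, \<sigma> l)) (ends (hs ! l)))"

lemma colour_class_coloured_monomial:
  "colour_class j (coloured_monomial hs \<sigma>) = (\<Sum>l | l < length hs \<and> \<sigma> l = j. ends (hs ! l))"
  unfolding coloured_monomial_def colour_class_sum colour_class_pairs
  by (simp add: sum.If_cases Int_def conj_commute)

lemma mset_sum_colour_classes:
  fixes \<sigma> :: "nat \<Rightarrow> 'n::finite"
  shows "mset hs = (\<Sum>j\<in>UNIV. \<Sum>l | l < length hs \<and> \<sigma> l = j. {#hs ! l#})"
proof -
  have "mset hs = (\<Sum>l<length hs. {#hs ! l#})"
    by (induction hs rule: rev_induct) (simp_all add: nth_append)
  also have "\<dots> = (\<Sum>j\<in>UNIV. \<Sum>l | l < length hs \<and> \<sigma> l = j. {#hs ! l#})"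
    using sum.group[of "{..<length hs}" "UNIV :: 'n set" \<sigma> "\<lambda>l. {#hs ! l#}"] by simp
  finally show ?thesis .
qed

lemma coloured_monomial_determines_graph:
  fixes \<sigma> \<sigma>\<^sub>0 :: "nat \<Rightarrow> 'n::finite"
  assumes "coloured_monomial hs \<sigma> = coloured_monomial hs\<^sub>0 \<sigma>\<^sub>0" and "inj_on \<sigma>\<^sub>0 {..<length hs\<^sub>0}"
  shows "mset hs = mset hs\<^sub>0"
proof -
  have "(\<Sum>l | l < length hs \<and> \<sigma> l = j. {#hs ! l#})
      = (\<Sum>l | l < length hs\<^sub>0 \<and> \<sigma>\<^sub>0 l = j. {#hs\<^sub>0 ! l#})" for j
  proof (rule sum_ends_determines_edges)
    show "card {l. l < length hs\<^sub>0 \<and> \<sigma>\<^sub>0 l = j} \<le> 1"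
      using assms(2) by (simp add: card_le_Suc0_iff_eq inj_on_def)
    show "(\<Sum>l | l < length hs \<and> \<sigma> l = j. ends (hs ! l))
        = (\<Sum>l | l < length hs\<^sub>0 \<and> \<sigma>\<^sub>0 l = j. ends (hs\<^sub>0 ! l))"
      using arg_cong[OF assms(1), of "colour_class j"] by (simp only: colour_class_coloured_monomial)
  qed simp_all
  then show ?thesis
    by (simp add: mset_sum_colour_classes[of hs \<sigma>] mset_sum_colour_classes[of hs\<^sub>0 \<sigma>\<^sub>0])
qed

definition vecs_of :: "('v \<times> 'n::finite \<Rightarrow> real) \<Rightarrow> 'v \<Rightarrow> real^'n" where
  "vecs_of x u = (\<chi> j. x (u, j))"

lemma edge_factor_vecs_of:
  "edge_factor (vecs_of x) e = (\<Sum>j\<in>UNIV. \<Prod>p\<in>#image_mset (\<lambda>u. (u, j)) (ends e). x p)"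
  by (cases e) (simp add: vecs_of_def inner_vec_def)

lemma prod_mset_sum: "(\<Prod>p\<in>#(\<Sum>l\<in>A. N l). x p) = (\<Prod>l\<in>A. \<Prod>p\<in>#N l. x p)"
  by (induction A rule: infinite_finite_induct) simp_all

lemma mG_vecs_of_expand:
  "mG (mset hs) (vecs_of x)
     = (\<Sum>\<sigma>\<in>{..<length hs} \<rightarrow>\<^sub>E (UNIV :: 'n::finite set). \<Prod>p\<in>#coloured_monomial hs \<sigma>. x p)"
proof -
  have "mG (mset hs) (vecs_of x) = (\<Prod>l<length hs. edge_factor (vecs_of x) (hs ! l))"
    unfolding mG_def by (induction hs rule: rev_induct) (simp_all add: nth_append)
  also have "\<dots> = (\<Sum>\<sigma>\<in>{..<length hs} \<rightarrow>\<^sub>E (UNIV :: 'n set).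
      \<Prod>l<length hs. \<Prod>p\<in>#image_mset (\<lambda>u. (u, \<sigma> l)) (ends (hs ! l)). x p)"
    unfolding edge_factor_vecs_of by (rule prod_sum_PiE) auto
  also have "\<dots> = (\<Sum>\<sigma>\<in>{..<length hs} \<rightarrow>\<^sub>E (UNIV :: 'n set). \<Prod>p\<in>#coloured_monomial hs \<sigma>. x p)"
    unfolding coloured_monomial_def prod_mset_sum ..
  finally show ?thesis .
qed

definition list_of_mset :: "'a multiset \<Rightarrow> 'a list" where
  "list_of_mset M = (SOME xs. mset xs = M)"

lemma mset_list_of_mset [simp]: "mset (list_of_mset M) = M"
  unfolding list_of_mset_def by (rule someI_ex) (rule ex_mset)

lemma injective_colouring_exists:
  assumes "k \<le> CARD('n)"
  obtains \<sigma> :: "nat \<Rightarrow> 'n::finite" where "\<sigma> \<in> {..<k} \<rightarrow>\<^sub>E UNIV" and "inj_on \<sigma> {..<k}"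
proof -
  obtain f :: "nat \<Rightarrow> 'n" where "inj_on f {..<k}"
    using card_le_inj[of "{..<k}" "UNIV :: 'n set"] assms by auto
  then show ?thesis
    by (intro that[of "restrict f {..<k}"]) (auto simp: inj_on_def)
qed

lemma mG_linear_independent:
  fixes c :: "'v uprod multiset \<Rightarrow> real"
  assumes "finite Gs" and "\<forall>d :: 'v \<Rightarrow> real^'n. (\<Sum>H\<in>Gs. c H * mG H d) = 0"
    and "G \<in> Gs" and "size G \<le> CARD('n)"
  shows "c G = 0"
proof -
  define P where "P = (SIGMA H:Gs. {..<length (list_of_mset H)} \<rightarrow>\<^sub>E (UNIV :: 'n set))"
  define mon where "mon q = coloured_monomial (list_of_mset (fst q)) (snd q)"
    for q :: "'v uprod multiset \<times> (nat \<Rightarrow> 'n)"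
  have "finite P"
    unfolding P_def using assms(1) by (intro finite_SigmaI finite_PiE) auto
  have "(\<Sum>q\<in>P. c (fst q) * (\<Prod>p\<in>#mon q. x p)) = (\<Sum>H\<in>Gs. c H * mG H (vecs_of x))" for x
  proof -
    have "(\<Sum>q\<in>P. c (fst q) * (\<Prod>p\<in>#mon q. x p))
        = (\<Sum>H\<in>Gs. \<Sum>\<sigma>\<in>{..<length (list_of_mset H)} \<rightarrow>\<^sub>E UNIV.
             c H * (\<Prod>p\<in>#coloured_monomial (list_of_mset H) \<sigma>. x p))"
      unfolding P_def mon_def by (subst sum.Sigma) (simp_all add: assms(1) finite_PiE split_beta)
    also have "\<dots> = (\<Sum>H\<in>Gs. c H * mG H (vecs_of x))"
      using mG_vecs_of_expand[of "list_of_mset _" x] by (simp add: sum_distrib_left)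
    finally show ?thesis .
  qed
  with assms(2) have vanish: "\<forall>x. (\<Sum>q\<in>P. c (fst q) * (\<Prod>p\<in>#mon q. x p)) = 0"
    by simp
  obtain \<sigma>\<^sub>0 :: "nat \<Rightarrow> 'n" where \<sigma>\<^sub>0: "\<sigma>\<^sub>0 \<in> {..<length (list_of_mset G)} \<rightarrow>\<^sub>E UNIV"
    "inj_on \<sigma>\<^sub>0 {..<length (list_of_mset G)}"
    using assms(4) by (metis mset_list_of_mset size_mset injective_colouring_exists)
  define fibre where "fibre = {q\<in>P. mon q = mon (G, \<sigma>\<^sub>0)}"
  have "(G, \<sigma>\<^sub>0) \<in> fibre"
    unfolding fibre_def P_def using assms(3) \<sigma>\<^sub>0(1) by simp
  then have "card fibre \<noteq> 0"
    unfolding fibre_def using \<open>finite P\<close> by auto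
  have "fst q = G" if "q \<in> fibre" for q
    using that coloured_monomial_determines_graph[OF _ \<sigma>\<^sub>0(2)]
    unfolding fibre_def mon_def
    by (metis (mono_tags, lifting) mem_Collect_eq mset_list_of_mset fst_conv snd_conv)
  then have "(\<Sum>q\<in>fibre. c (fst q)) = of_nat (card fibre) * c G"
    by simp
  moreover have "(\<Sum>q\<in>fibre. c (fst q)) = 0"
    unfolding fibre_def by (rule monomial_coefficients_vanish[OF \<open>finite P\<close> vanish])
  ultimately show ?thesis
    using \<open>card fibre \<noteq> 0\<close> by simp
qed

lemma finite_multigraphs_upto:
  assumes "finite V"
  shows "finite (multigraphs_upto V k)"
proof -
  define E where "E = case_prod Upair ` (V \<times> V)"
  have "multigraphs_upto V k \<subseteq> (\<Union>i\<le>k. multisets_of_size E i)"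
  proof
    fix G assume G: "G \<in> multigraphs_upto V k"
    have "set_mset G \<subseteq> E"
    proof
      fix e assume "e \<in># G"
      with G have "set_uprod e \<subseteq> V" unfolding multigraphs_upto_def by auto
      then show "e \<in> E" unfolding E_def by (cases e) auto
    qed
    with G show "G \<in> (\<Union>i\<le>k. multisets_of_size E i)"
      unfolding multigraphs_upto_def multisets_of_size_def by auto
  qed
  moreover have "finite E" unfolding E_def using assms by simp
  ultimately show ?thesis by (meson finite_UN_I finite_atMost finite_multisets_of_size finite_subset)
qed

theorem mainTheorem1:
  fixes V :: "'v set"
  assumes "finite V"
    and "\<forall>d :: 'v \<Rightarrow> real^'n.
           (\<Sum>G\<in>multigraphs_upto V CARD('n). c G * mG G d) = 0"
  shows "\<forall>G\<in>multigraphs_upto V CARD('n). c G = 0"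
proof
  fix G assume "G \<in> multigraphs_upto V CARD('n)"
  then show "c G = 0"
    using mG_linear_independent[OF finite_multigraphs_upto[OF assms(1)] assms(2)]
    by (simp add: multigraphs_upto_def)
qed

end
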